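(* Under the hypotheses and notation of the context, for every $\epsilon>0$ there exists $\mu_\epsilon>1$ such that for all $1\le\mu\le\mu_\epsilon$ and all $(x,t)\in\mathbb T^N\times[0,\infty)$, $$P_{\eta\mu}[u](x,t)\ge P_{\eta1}[u](x,t)-\epsilon.$$ Consequently, if $m_{\eta1}:=\lim_{t\to\infty}\max\{0,\sup_xP_{\eta1}[u](x,t)\}>0$, then there is $\mu_\eta>1$ such that $\sup_{x}P_{\eta\mu}[u](x,t)\ge m_{\eta1}/2$ for all $t\ge0$ and $1<\mu<\mu_\eta$.
   Context: $\mathbb T^N=\mathbb R^N/\mathbb Z^N$. $u\in C(\mathbb T^N\times[0,\infty))$ is a bounded function (the bounded viscosity solution of the equation $u_t+\sup_\theta\{-\mathrm{tr}(A_\theta D^2u)+H_\theta(x,Du)\}=0$ with ergodic constant normalized to $0$, under the standing assumptions of bounded Lipschitz diffusions, locally Lipschitz Hamiltonians, convexity in $p$, and uniform Lipschitz bounds in $x$), and $v$ is a bounded continuous function on $\mathbb T^N$. For $\eta>0$, $\mu\ge1$: $P_{\eta\mu}[u](x,t)=\sup_{s\ge t}\{u(x,t)-v(x)-\mu(u(x,s)-v(x))-\mu\eta(s-t)\}$. It is known (Lemma 4.2) that $t\mapsto\max\{0,\sup_xP_{\eta1}[u](x,t)\}$ is nonincreasing, so $m_{\eta1}$ is well defined. *)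

theory Defs
  imports "HOL-Analysis.Analysis"
begin

text \<open>Functions on the torus T^N = R^N / Z^N are represented as Z^N-periodic
functions on real^'n (N = CARD('n)).\<close>

definition zperiodic :: "(real^'n \<Rightarrow> 'b) \<Rightarrow> bool" where
  "zperiodic f \<longleftrightarrow> (\<forall>x k. (\<forall>i. k $ i \<in> \<int>) \<longrightarrow> f (x + k) = f x)"

definition Pop :: "real \<Rightarrow> real \<Rightarrow> (real^'n \<Rightarrow> real \<Rightarrow> real) \<Rightarrow> (real^'n \<Rightarrow> real)
    \<Rightarrow> real^'n \<Rightarrow> real \<Rightarrow> real" where
  "Pop \<eta> \<mu> u v x t = (SUP s\<in>{t..}. u x t - v x - \<mu> * (u x s - v x) - \<mu> * \<eta> * (s - t))"

end

theory Submission
  imports Defs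
begin

(* Write  Pobj \<eta> \<mu> u v x t s  for the quantity whose supremum over s \<ge> t is
   P_{\<eta>\<mu>}[u](x,t), and let K bound |u - v|.  Two elementary observations drive the proof:
   (1) P_{\<eta>1}[u] \<ge> 0 (take s = t), so any s that is within 1 of optimal for \<mu> = 1 has a
       bounded "cost"  (u(x,s) - v(x)) + \<eta>(s - t) \<le> 3K + 1;
   (2) Pobj for \<mu> differs from Pobj for 1 exactly by (\<mu> - 1) times that cost.
   Hence at a near-maximiser s for \<mu> = 1 we lose at most (\<mu> - 1)(3K + 1), which is below \<epsilon>/2
   once \<mu> \<le> 1 + \<epsilon>/(2(3K + 1)), uniformly in (x,t).
   For the second claim, the function t \<mapsto> max 0 (sup_x P_{\<eta>1}[u](x,t)) is nonincreasing
   and tends to m, so it is \<ge> m everywhere; with \<epsilon> = m/2 the first claim transfers to the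
   suprema over x and gives sup_x P_{\<eta>\<mu>}[u] \<ge> m - m/2.
   The file first collects boundedness facts about Pobj and Pop, then proves the uniform
   estimate (Pop_close_to_Pop_1), two abstract lemmas on limits and suprema, and finally
   the theorem. *)

definition Pobj :: "real \<Rightarrow> real \<Rightarrow> ('a \<Rightarrow> real \<Rightarrow> real) \<Rightarrow> ('a \<Rightarrow> real) \<Rightarrow> 'a \<Rightarrow> real \<Rightarrow> real \<Rightarrow> real"
  where "Pobj \<eta> \<mu> u v x t s = u x t - v x - \<mu> * (u x s - v x) - \<mu> * \<eta> * (s - t)"

lemma Pop_eq_SUP_Pobj: "Pop \<eta> \<mu> u v x t = (SUP s\<in>{t..}. Pobj \<eta> \<mu> u v x t s)"
  by (simp add: Pop_def Pobj_def)

lemma Pobj_shift_mu: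
  "Pobj \<eta> \<mu> u v x t s = Pobj \<eta> 1 u v x t s - (\<mu> - 1) * ((u x s - v x) + \<eta> * (s - t))"
  by (simp add: Pobj_def algebra_simps)

lemma Pobj_le:
  assumes K: "\<forall>x s. s \<ge> 0 \<longrightarrow> \<bar>u x s - v x\<bar> \<le> K"
    and "\<eta> \<ge> 0" "\<mu> \<ge> 0" "0 \<le> t" "t \<le> s"
  shows "Pobj \<eta> \<mu> u v x t s \<le> (1 + \<mu>) * K"
proof -
  have "\<bar>u x t - v x\<bar> \<le> K" "\<bar>u x s - v x\<bar> \<le> K" using K assms(4,5) by auto
  moreover have "\<mu> * \<eta> * (s - t) \<ge> 0" using assms by simp
  moreover have "\<mu> * (- (u x s - v x)) \<le> \<mu> * K"
    using \<open>\<bar>u x s - v x\<bar> \<le> K\<close> \<open>\<mu> \<ge> 0\<close> by (intro mult_left_mono) auto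
  ultimately show ?thesis by (simp add: Pobj_def algebra_simps abs_le_iff)
qed

lemma Pobj_bdd_above:
  assumes K: "\<forall>x s. s \<ge> 0 \<longrightarrow> \<bar>u x s - v x\<bar> \<le> K"
    and "\<eta> \<ge> 0" "\<mu> \<ge> 0" "0 \<le> t"
  shows "bdd_above (Pobj \<eta> \<mu> u v x t ` {t..})"
  using Pobj_le[OF assms] by (intro bdd_aboveI2) auto

lemma Pobj_le_Pop:
  fixes u :: "real^'n \<Rightarrow> real \<Rightarrow> real"
  assumes K: "\<forall>x s. s \<ge> 0 \<longrightarrow> \<bar>u x s - v x\<bar> \<le> K"
    and "\<eta> \<ge> 0" "\<mu> \<ge> 0" "0 \<le> t" "t \<le> s"
  shows "Pobj \<eta> \<mu> u v x t s \<le> Pop \<eta> \<mu> u v x t"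
  unfolding Pop_eq_SUP_Pobj using Pobj_bdd_above[OF assms(1-4)] assms(5)
  by (intro cSUP_upper) auto

lemma Pop_le:
  fixes u :: "real^'n \<Rightarrow> real \<Rightarrow> real"
  assumes K: "\<forall>x s. s \<ge> 0 \<longrightarrow> \<bar>u x s - v x\<bar> \<le> K"
    and "\<eta> \<ge> 0" "\<mu> \<ge> 0" "0 \<le> t"
  shows "Pop \<eta> \<mu> u v x t \<le> (1 + \<mu>) * K"
  unfolding Pop_eq_SUP_Pobj using Pobj_le[OF assms] by (intro cSUP_least) auto

text \<open>Choosing \<open>s = t\<close> shows \<open>P_{\<eta>1}[u] \<ge> 0\<close>.\<close>

lemma Pop_1_nonneg:
  fixes u :: "real^'n \<Rightarrow> real \<Rightarrow> real"
  assumes K: "\<forall>x s. s \<ge> 0 \<longrightarrow> \<bar>u x s - v x\<bar> \<le> K"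
    and "\<eta> \<ge> 0" "0 \<le> t"
  shows "0 \<le> Pop \<eta> 1 u v x t"
  using Pobj_le_Pop[OF K \<open>\<eta> \<ge> 0\<close> _ \<open>0 \<le> t\<close> order_refl, where \<mu>=1 and x=x]
  by (simp add: Pobj_def)

lemma Pop_near_maximiser:
  fixes u :: "real^'n \<Rightarrow> real \<Rightarrow> real"
  assumes K: "\<forall>x s. s \<ge> 0 \<longrightarrow> \<bar>u x s - v x\<bar> \<le> K"
    and "\<eta> \<ge> 0" "\<mu> \<ge> 0" "0 \<le> t" "\<delta> > 0"
  obtains s where "t \<le> s" "Pop \<eta> \<mu> u v x t - \<delta> < Pobj \<eta> \<mu> u v x t s"
proof -
  have "Pop \<eta> \<mu> u v x t - \<delta> < (SUP s\<in>{t..}. Pobj \<eta> \<mu> u v x t s)"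
    using \<open>\<delta> > 0\<close> by (simp add: Pop_eq_SUP_Pobj)
  then show ?thesis
    using that less_cSUP_iff[of "{t..}", OF _ Pobj_bdd_above[OF assms(1-4), where x=x]] by auto
qed

lemma cost_bound_at_good_point:
  assumes K: "\<forall>x s. s \<ge> 0 \<longrightarrow> \<bar>u x s - v x\<bar> \<le> K"
    and "0 \<le> t" "t \<le> s" and good: "Pobj \<eta> 1 u v x t s > -1"
  shows "(u x s - v x) + \<eta> * (s - t) \<le> 3 * K + 1"
proof -
  have "\<bar>u x t - v x\<bar> \<le> K" "\<bar>u x s - v x\<bar> \<le> K" using K assms(2,3) by auto
  with good show ?thesis by (simp add: Pobj_def abs_le_iff)
qed

lemma Pop_close_to_Pop_1:
  fixes u :: "real^'n \<Rightarrow> real \<Rightarrow> real"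
  assumes K: "\<forall>x s. s \<ge> 0 \<longrightarrow> \<bar>u x s - v x\<bar> \<le> K"
    and "\<eta> \<ge> 0" and "\<epsilon> > 0"
  shows "\<exists>\<mu>\<epsilon>>1. \<forall>\<mu>. 1 \<le> \<mu> \<and> \<mu> \<le> \<mu>\<epsilon> \<longrightarrow>
           (\<forall>x. \<forall>t\<ge>0. Pop \<eta> \<mu> u v x t \<ge> Pop \<eta> 1 u v x t - \<epsilon>)"
proof -
  define c where "c = 3 * K + 1"
  have "K \<ge> 0" using K by (meson abs_ge_zero order_trans order_refl)
  then have "c > 0" by (simp add: c_def)
  define \<mu>\<epsilon> where "\<mu>\<epsilon> = 1 + \<epsilon> / (2 * c)"
  have "Pop \<eta> \<mu> u v x t \<ge> Pop \<eta> 1 u v x t - \<epsilon>"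
    if \<mu>: "1 \<le> \<mu>" "\<mu> \<le> \<mu>\<epsilon>" and "0 \<le> t" for \<mu> x t
  proof -
    obtain s where "t \<le> s" and near: "Pop \<eta> 1 u v x t - min 1 (\<epsilon>/2) < Pobj \<eta> 1 u v x t s"
      using Pop_near_maximiser[OF K \<open>\<eta> \<ge> 0\<close> _ \<open>0 \<le> t\<close>, where \<mu>=1 and \<delta>="min 1 (\<epsilon>/2)" and x=x]
        \<open>\<epsilon> > 0\<close> by auto
    have "0 \<le> Pop \<eta> 1 u v x t" using Pop_1_nonneg[OF K \<open>\<eta> \<ge> 0\<close> \<open>0 \<le> t\<close>] .
    with near have "(u x s - v x) + \<eta> * (s - t) \<le> c"
      unfolding c_def by (intro cost_bound_at_good_point[OF K \<open>0 \<le> t\<close> \<open>t \<le> s\<close>]) linarith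
    then have "(\<mu> - 1) * ((u x s - v x) + \<eta> * (s - t)) \<le> (\<mu> - 1) * c"
      using \<mu> by (intro mult_left_mono) auto
    also have "\<dots> \<le> (\<epsilon> / (2 * c)) * c"
      using \<mu> \<open>c > 0\<close> by (intro mult_right_mono) (auto simp: \<mu>\<epsilon>_def)
    also have "\<dots> = \<epsilon> / 2" using \<open>c > 0\<close> by simp
    finally have "Pobj \<eta> \<mu> u v x t s \<ge> Pop \<eta> 1 u v x t - \<epsilon>"
      using near Pobj_shift_mu[of \<eta> \<mu> u v x t s] by linarith
    moreover have "Pobj \<eta> \<mu> u v x t s \<le> Pop \<eta> \<mu> u v x t"
      using Pobj_le_Pop[OF K \<open>\<eta> \<ge> 0\<close> _ \<open>0 \<le> t\<close> \<open>t \<le> s\<close>] \<mu> by simp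
    ultimately show ?thesis by linarith
  qed
  moreover have "\<mu>\<epsilon> > 1" using \<open>c > 0\<close> \<open>\<epsilon> > 0\<close> by (simp add: \<mu>\<epsilon>_def)
  ultimately show ?thesis by blast
qed

lemma antimono_on_ge_limit:
  fixes g :: "real \<Rightarrow> real"
  assumes "antimono_on {0..} g" and "(g \<longlongrightarrow> m) at_top" and "0 \<le> t"
  shows "m \<le> g t"
proof (rule tendsto_upperbound[OF assms(2)])
  show "\<forall>\<^sub>F s in at_top. g s \<le> g t"
    using eventually_ge_at_top[of t] by eventually_elim (use assms(1,3) in \<open>auto simp: monotone_on_def\<close>)
qed simp

lemma SUP_ge_SUP_minus:
  fixes f g :: "'a \<Rightarrow> real"
  assumes "bdd_above (range f)" and "\<And>x. f x \<ge> g x - \<epsilon>"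
  shows "(SUP x. f x) \<ge> (SUP x. g x) - \<epsilon>"
proof -
  have "g x \<le> (SUP x. f x) + \<epsilon>" for x
    using assms(2)[of x] cSUP_upper[OF UNIV_I assms(1), of x] by linarith
  then have "(SUP x. g x) \<le> (SUP x. f x) + \<epsilon>" by (intro cSUP_least) auto
  then show ?thesis by linarith
qed

theorem lemma4p3:
  fixes u :: "real^'n \<Rightarrow> real \<Rightarrow> real" and v :: "real^'n \<Rightarrow> real"
    and \<eta> :: real
  assumes eta_pos: "\<eta> > 0"
    and u_per: "\<And>t. zperiodic (\<lambda>x. u x t)"
    and u_cont: "continuous_on (UNIV \<times> {0..}) (\<lambda>(x, t). u x t)"
    and u_bdd: "\<exists>M. \<forall>x t. t \<ge> 0 \<longrightarrow> \<bar>u x t\<bar> \<le> M"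
    and v_per: "zperiodic v"
    and v_cont: "continuous_on UNIV v"
    and v_bdd: "\<exists>M. \<forall>x. \<bar>v x\<bar> \<le> M"
    and lemma4p2: "antimono_on {0..} (\<lambda>t. max 0 (SUP x. Pop \<eta> 1 u v x t))"
  shows "(\<forall>\<epsilon>>0. \<exists>\<mu>\<epsilon>>1. \<forall>\<mu>. 1 \<le> \<mu> \<and> \<mu> \<le> \<mu>\<epsilon> \<longrightarrow>
            (\<forall>x. \<forall>t\<ge>0. Pop \<eta> \<mu> u v x t \<ge> Pop \<eta> 1 u v x t - \<epsilon>))
       \<and> (\<forall>m. ((\<lambda>t. max 0 (SUP x. Pop \<eta> 1 u v x t)) \<longlongrightarrow> m) at_top \<longrightarrow> m > 0 \<longrightarrow>
            (\<exists>\<mu>\<eta>>1. \<forall>t\<ge>0. \<forall>\<mu>. 1 < \<mu> \<and> \<mu> < \<mu>\<eta> \<longrightarrow>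
               (SUP x. Pop \<eta> \<mu> u v x t) \<ge> m / 2))"
proof -
  obtain Mu Mv where "\<forall>x t. t \<ge> 0 \<longrightarrow> \<bar>u x t\<bar> \<le> Mu" "\<forall>x. \<bar>v x\<bar> \<le> Mv"
    using u_bdd v_bdd by blast
  then have K: "\<forall>x s. s \<ge> 0 \<longrightarrow> \<bar>u x s - v x\<bar> \<le> Mu + Mv"
    by (meson abs_triangle_ineq4 add_mono order_trans)
  have eta: "\<eta> \<ge> 0" using eta_pos by simp
  note close = Pop_close_to_Pop_1[OF K eta]
  have "\<exists>\<mu>\<eta>>1. \<forall>t\<ge>0. \<forall>\<mu>. 1 < \<mu> \<and> \<mu> < \<mu>\<eta> \<longrightarrow> (SUP x. Pop \<eta> \<mu> u v x t) \<ge> m / 2"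
    if lim: "((\<lambda>t. max 0 (SUP x. Pop \<eta> 1 u v x t)) \<longlongrightarrow> m) at_top" and "m > 0" for m
  proof -
    obtain \<mu>\<eta> where "\<mu>\<eta> > 1" and near: "\<And>\<mu> x t. 1 \<le> \<mu> \<Longrightarrow> \<mu> \<le> \<mu>\<eta> \<Longrightarrow> t \<ge> 0 \<Longrightarrow>
        Pop \<eta> \<mu> u v x t \<ge> Pop \<eta> 1 u v x t - m / 2"
      using close[of "m / 2"] \<open>m > 0\<close> by auto
    have "(SUP x. Pop \<eta> \<mu> u v x t) \<ge> m / 2" if "t \<ge> 0" "1 < \<mu>" "\<mu> < \<mu>\<eta>" for t \<mu>
    proof -
      have "(SUP x. Pop \<eta> 1 u v x t) \<ge> m"
        using antimono_on_ge_limit[OF lemma4p2 lim \<open>t \<ge> 0\<close>] \<open>m > 0\<close> by linarith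
      moreover have "bdd_above (range (\<lambda>x. Pop \<eta> \<mu> u v x t))"
        using Pop_le[OF K eta _ \<open>t \<ge> 0\<close>, of \<mu>] \<open>1 < \<mu>\<close> by (intro bdd_aboveI2) auto
      ultimately show ?thesis
        using SUP_ge_SUP_minus[of "\<lambda>x. Pop \<eta> \<mu> u v x t" "\<lambda>x. Pop \<eta> 1 u v x t" "m / 2"]
          near that by fastforce
    qed
    with \<open>\<mu>\<eta> > 1\<close> show ?thesis by blast
  qed
  with close show ?thesis by blast
qed

end
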